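(* Let $A$, $Q$, $H\subseteq A^Q$ be non-empty finite sets and $\mathcal F$ a clone with carrier $A$ such that (a) $\mathcal F$ satisfies $\Delta^\partial$, or (b) $\mathcal F$ contains a $\partial$-function and $|H(q)|\le2$ for all $q\in Q$. Suppose $H\in\mathrm{Inv}_Q\mathcal F$. Let $p,q\in Q$ and $a\in H(p)$, and suppose $H$ weakly separates $p$ from $q$ at the point $a$. Then $H$ strongly separates $p$ from $q$ at the point $a$.
   Context: $\mathcal O(A)=\bigcup_{n<\omega}A^{A^n}$; $\mathcal F_{[n]}=\mathcal F\cap A^{A^n}$; $A^3_3$ is the set of triples $\mathbf a=a_0a_1a_2\in A^3$ with three distinct entries, $\mathrm{ran}\,\mathbf a$ the set of entries. A clone with carrier $A$ is a subset of $\mathcal O(A)$ containing all projections and closed under composition. For $f\in\mathcal O(A)_{[n]}$ and $h_i\in A^Q$, $f(h_0,\dots,h_{n-1})$ is $q\mapsto f(h_0(q)\dots h_{n-1}(q))$; $\mathrm{Inv}_Q\mathcal F$ is the set of $H\subseteq A^Q$ closed under all such compositions with $f\in\mathcal F$. $H(q)=\{h(q):h\in H\}$. A $\partial$-function is $\partial\in\mathcal O(A)_{[3]}$ with $\partial(xxy)=\partial(xyx)=\partial(yxx)=x$; $\mathcal F$ satisfies $\Delta^\partial$ if for all $\mathbf a\in A^3_3$ and $a\in\mathrm{ran}\,\mathbf a$ there is a $\partial$-function $\partial\in\mathcal F$ with $\partial(\mathbf a)=a$. $H$ weakly separates $p$ from $q$ at $a\in H(p)$ if there are $h_1,h_2\in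 H$ with $h_1(p)=h_2(p)=a$ and $h_1(q)\ne h_2(q)$. $H$ strongly separates $p$ from $q$ at $a$ if for every $b\in H(q)$ there is $h\in H$ with $h(p)=a$ and $h(q)=b$. *)

theory Defs
  imports "HOL-Library.FuncSet"
begin

text \<open>An n-ary operation on A is represented as a pair (n, f), where
 f :: (nat => 'a) => 'a is an element of A^(A^n), i.e. f maps
 {..<n} ->_E A into A and is undefined (extensional) elsewhere.\<close>

type_synonym 'a op = "nat \<times> ((nat \<Rightarrow> 'a) \<Rightarrow> 'a)"

definition ops :: "'a set \<Rightarrow> nat \<Rightarrow> ((nat \<Rightarrow> 'a) \<Rightarrow> 'a) set" where
  "ops A n = ({..<n} \<rightarrow>\<^sub>E A) \<rightarrow>\<^sub>E A"

definition O_A :: "'a set \<Rightarrow> 'a op set" where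
  "O_A A = {(n, f). f \<in> ops A n}"

definition proj :: "'a set \<Rightarrow> nat \<Rightarrow> nat \<Rightarrow> (nat \<Rightarrow> 'a) \<Rightarrow> 'a" where
  "proj A n i = (\<lambda>x \<in> {..<n} \<rightarrow>\<^sub>E A. x i)"

definition compose :: "'a set \<Rightarrow> nat \<Rightarrow> ((nat \<Rightarrow> 'a) \<Rightarrow> 'a) \<Rightarrow> nat \<Rightarrow> (nat \<Rightarrow> (nat \<Rightarrow> 'a) \<Rightarrow> 'a)
    \<Rightarrow> (nat \<Rightarrow> 'a) \<Rightarrow> 'a" where
  "compose A n f m g = (\<lambda>x \<in> {..<m} \<rightarrow>\<^sub>E A. f (\<lambda>i \<in> {..<n}. g i x))"

definition is_clone :: "'a set \<Rightarrow> 'a op set \<Rightarrow> bool" where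
  "is_clone A F \<longleftrightarrow> F \<subseteq> O_A A
     \<and> (\<forall>n i. i < n \<longrightarrow> (n, proj A n i) \<in> F)
     \<and> (\<forall>n f m g. (n, f) \<in> F \<longrightarrow> (\<forall>i<n. (m, g i) \<in> F) \<longrightarrow> (m, compose A n f m g) \<in> F)"

definition tup3 :: "'a \<Rightarrow> 'a \<Rightarrow> 'a \<Rightarrow> nat \<Rightarrow> 'a" where
  "tup3 x y z = (\<lambda>i \<in> {..<3::nat}. if i = 0 then x else if i = 1 then y else z)"

definition is_partial_fun :: "'a set \<Rightarrow> ((nat \<Rightarrow> 'a) \<Rightarrow> 'a) \<Rightarrow> bool" where
  "is_partial_fun A d \<longleftrightarrow> d \<in> ops A 3 \<and>
     (\<forall>x\<in>A. \<forall>y\<in>A. d (tup3 x x y) = x \<and> d (tup3 x y x) = x \<and> d (tup3 y x x) = x)"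

definition Delta_partial :: "'a set \<Rightarrow> 'a op set \<Rightarrow> bool" where
  "Delta_partial A F \<longleftrightarrow>
     (\<forall>a0\<in>A. \<forall>a1\<in>A. \<forall>a2\<in>A. a0 \<noteq> a1 \<and> a0 \<noteq> a2 \<and> a1 \<noteq> a2 \<longrightarrow>
        (\<forall>a\<in>{a0, a1, a2}. \<exists>d. (3, d) \<in> F \<and> is_partial_fun A d \<and> d (tup3 a0 a1 a2) = a))"

definition apply_Q :: "'q set \<Rightarrow> nat \<Rightarrow> ((nat \<Rightarrow> 'a) \<Rightarrow> 'a) \<Rightarrow> (nat \<Rightarrow> 'q \<Rightarrow> 'a) \<Rightarrow> 'q \<Rightarrow> 'a" where
  "apply_Q Q n f h = (\<lambda>q \<in> Q. f (\<lambda>i \<in> {..<n}. h i q))"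

definition Inv_Q :: "'a set \<Rightarrow> 'q set \<Rightarrow> 'a op set \<Rightarrow> ('q \<Rightarrow> 'a) set set" where
  "Inv_Q A Q F = {H. H \<subseteq> Q \<rightarrow>\<^sub>E A \<and>
     (\<forall>n f h. (n, f) \<in> F \<longrightarrow> (\<forall>i<n. h i \<in> H) \<longrightarrow> apply_Q Q n f h \<in> H)}"

definition weakly_separates :: "('q \<Rightarrow> 'a) set \<Rightarrow> 'q \<Rightarrow> 'q \<Rightarrow> 'a \<Rightarrow> bool" where
  "weakly_separates H p q a \<longleftrightarrow>
     (\<exists>h1\<in>H. \<exists>h2\<in>H. h1 p = a \<and> h2 p = a \<and> h1 q \<noteq> h2 q)"

definition strongly_separates :: "('q \<Rightarrow> 'a) set \<Rightarrow> 'q \<Rightarrow> 'q \<Rightarrow> 'a \<Rightarrow> bool" where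
  "strongly_separates H p q a \<longleftrightarrow>
     (\<forall>b\<in>(\<lambda>h. h q) ` H. \<exists>h\<in>H. h p = a \<and> h q = b)"

end

theory Submission
  imports Defs
begin

text \<open>Let \<open>h\<^sub>1, h\<^sub>2 \<in> H\<close> agree on \<open>p\<close> (value \<open>a\<close>) and differ on \<open>q\<close>, and let \<open>b = g q\<close> for some
  \<open>g \<in> H\<close>. If \<open>b\<close> is one of \<open>h\<^sub>1 q, h\<^sub>2 q\<close> there is nothing to do; this always happens when
  \<open>|H(q)| \<le> 2\<close>. Otherwise \<open>h\<^sub>1 q, h\<^sub>2 q, b\<close> are distinct, so \<open>\<Delta>\<^sup>\<partial>\<close> yields a \<open>\<partial>\<close>-function \<open>d\<close>
  with \<open>d(h\<^sub>1 q, h\<^sub>2 q, b) = b\<close>, and \<open>d(h\<^sub>1, h\<^sub>2, g) \<in> H\<close> takes the value \<open>d(a, a, g p) = a\<close>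
  at \<open>p\<close> and \<open>b\<close> at \<open>q\<close>.\<close>

lemma Inv_Q_apply_ternary:
  assumes "H \<in> Inv_Q A Q F" and "(3, d) \<in> F" and "h1 \<in> H" "h2 \<in> H" "h3 \<in> H"
  shows "(\<lambda>r \<in> Q. d (tup3 (h1 r) (h2 r) (h3 r))) \<in> H"
proof -
  define h where "h = (\<lambda>i::nat. if i = 0 then h1 else if i = 1 then h2 else h3)"
  have "\<forall>i<3. h i \<in> H"
    using assms(3-5) unfolding h_def by auto
  then have "apply_Q Q 3 d h \<in> H"
    using assms(1,2) unfolding Inv_Q_def by blast
  moreover have "apply_Q Q 3 d h = (\<lambda>r \<in> Q. d (tup3 (h1 r) (h2 r) (h3 r)))"
    unfolding apply_Q_def tup3_def h_def by (auto intro!: ext arg_cong[where f = d])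
  ultimately show ?thesis
    by simp
qed

lemma strongly_separatesI_weak_witnesses:
  assumes "h1 \<in> H" "h2 \<in> H" "h1 p = a" "h2 p = a"
    and "\<And>g. g \<in> H \<Longrightarrow> g q \<noteq> h1 q \<Longrightarrow> g q \<noteq> h2 q \<Longrightarrow> \<exists>h\<in>H. h p = a \<and> h q = g q"
  shows "strongly_separates H p q a"
  unfolding strongly_separates_def
proof
  fix b assume "b \<in> (\<lambda>h. h q) ` H"
  then obtain g where "g \<in> H" "b = g q"
    by blast
  then show "\<exists>h\<in>H. h p = a \<and> h q = b"
    using assms by (cases "g q = h1 q \<or> g q = h2 q") auto
qed

lemma strongly_separates_if_card_le_2:
  assumes "finite H" and "card ((\<lambda>h. h q) ` H) \<le> 2" and "weakly_separates H p q a"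
  shows "strongly_separates H p q a"
proof -
  obtain h1 h2 where h: "h1 \<in> H" "h2 \<in> H" "h1 p = a" "h2 p = a" "h1 q \<noteq> h2 q"
    using assms(3) unfolding weakly_separates_def by blast
  show ?thesis
  proof (rule strongly_separatesI_weak_witnesses[OF h(1-4)])
    fix g assume "g \<in> H" "g q \<noteq> h1 q" "g q \<noteq> h2 q"
    then have "card {h1 q, h2 q, g q} \<le> card ((\<lambda>h. h q) ` H)"
      using h assms(1) by (intro card_mono) auto
    with assms(2) \<open>g q \<noteq> h1 q\<close> \<open>g q \<noteq> h2 q\<close> h(5) show "\<exists>h\<in>H. h p = a \<and> h q = g q"
      by simp
  qed
qed

lemma strongly_separates_if_Delta_partial:
  assumes "Delta_partial A F" and "H \<in> Inv_Q A Q F"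
    and "p \<in> Q" "q \<in> Q" and "weakly_separates H p q a"
  shows "strongly_separates H p q a"
proof -
  obtain h1 h2 where h: "h1 \<in> H" "h2 \<in> H" "h1 p = a" "h2 p = a" "h1 q \<noteq> h2 q"
    using assms(5) unfolding weakly_separates_def by blast
  have in_A: "f r \<in> A" if "f \<in> H" "r \<in> Q" for f r
    using assms(2) that unfolding Inv_Q_def by blast
  show ?thesis
  proof (rule strongly_separatesI_weak_witnesses[OF h(1-4)])
    fix g assume g: "g \<in> H" "g q \<noteq> h1 q" "g q \<noteq> h2 q"
    have "h1 q \<in> A" "h2 q \<in> A" "g q \<in> A"
      using in_A h(1,2) g(1) assms(4) by auto
    then obtain d where d: "(3, d) \<in> F" "is_partial_fun A d" "d (tup3 (h1 q) (h2 q) (g q)) = g q"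
      using assms(1) h(5) g(2,3) unfolding Delta_partial_def by (metis insertCI)
    define k where "k = (\<lambda>r \<in> Q. d (tup3 (h1 r) (h2 r) (g r)))"
    have "a \<in> A" "g p \<in> A"
      using in_A h(1,3) g(1) assms(3) by auto
    then have "k p = a"
      using d(2) h(3,4) assms(3) unfolding k_def is_partial_fun_def by simp
    moreover have "k q = g q"
      using d(3) assms(4) unfolding k_def by simp
    moreover have "k \<in> H"
      unfolding k_def using Inv_Q_apply_ternary[OF assms(2) d(1) h(1,2) g(1)] .
    ultimately show "\<exists>h\<in>H. h p = a \<and> h q = g q"
      by blast
  qed
qed

theorem lemma1:
  fixes A :: "'a set" and Q :: "'q set" and H :: "('q \<Rightarrow> 'a) set" and F :: "'a op set"
  assumes "finite A" "A \<noteq> {}" "finite Q" "Q \<noteq> {}" "finite H" "H \<noteq> {}"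
    and "H \<subseteq> Q \<rightarrow>\<^sub>E A"
    and "is_clone A F"
    and "Delta_partial A F \<or>
         ((\<exists>d. (3, d) \<in> F \<and> is_partial_fun A d) \<and> (\<forall>q\<in>Q. card ((\<lambda>h. h q) ` H) \<le> 2))"
    and "H \<in> Inv_Q A Q F"
    and "p \<in> Q" "q \<in> Q" "a \<in> (\<lambda>h. h p) ` H"
    and "weakly_separates H p q a"
  shows "strongly_separates H p q a"
proof -
  have "Delta_partial A F \<or> card ((\<lambda>h. h q) ` H) \<le> 2"
    using assms(9,12) by blast
  then show ?thesis
    using strongly_separates_if_Delta_partial[OF _ assms(10-12,14)]
      strongly_separates_if_card_le_2[OF assms(5) _ assms(14)] by blast
qed

end
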